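(* Let $a=p^\gamma$ with $p$ an odd prime and $\gamma\ge1$; write $\phi(a)=2^m d$ with $d$ odd (so $m\ge1$), let $G=(\mathbb{Z}/a\mathbb{Z})^*$ and let $H$ be the maximal subgroup of $G$ of odd order. Let $n$ be a positive integer with $\gcd(n,a)=1$. Let $\mathcal{P}$ be the sequence of prime factors of $n$ counted with multiplicity, let $\mathcal{T}$ be the subsequence of those primes $r$ in $\mathcal{P}$ with $r\bmod a\notin H$, and let $t$ be the length of $\mathcal{T}$. Suppose that the set of residues modulo $a$ of the elements of $\mathcal{P}$ contains $H$. (i) If $t\ge 2^{m-1}$, then $n\notin\mathcal{E}^*_a$. (ii) Fix a primitive root $g$ modulo $p^\gamma$. If $t=2^{m-1}-1$, then $n\in\mathcal{E}^*_a$ if and only if there exists an odd integer $e$ such that every prime $r$ in $\mathcal{T}$ satisfies $r\equiv g^{e'}\pmod{p^\gamma}$ for some integer $e'$ with $e'\equiv e$ or $e'\equiv -e\pmod{2^m}$.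
   Context: For a positive integer $n$, let $R(n;a)$ be the number of pairs $(x,y)$ of positive integers with $\frac{a}{n}=\frac1x+\frac1y$, and $\mathcal{E}^*_a=\{n\in\mathbb{N}:R(n;a)=0,\ \gcd(n,a)=1\}$. *)

theory Defs
  imports "HOL-Number_Theory.Number_Theory"
begin

definition R :: "nat \<Rightarrow> nat \<Rightarrow> nat" where
  "R n a = card {(x :: nat, y :: nat). x > 0 \<and> y > 0 \<and>
                  real a / real n = 1 / real x + 1 / real y}"

definition E_star :: "nat \<Rightarrow> nat set" where
  "E_star a = {n. n > 0 \<and> R n a = 0 \<and> gcd n a = 1}"

definition unit_group :: "nat \<Rightarrow> int monoid" where
  "unit_group a = units_of (residue_ring (int a))"

end

theory Submission
  imports Defs
begin

(*
  Fix a primitive root g modulo a and let ind r be the index of r, so that g ^ ind r = r mod a.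
  Since a is an odd prime power, g ^ (phi(a)/2) = -1 mod a, hence for u, v coprime to a we have
  a | u + v iff ind u - ind v = phi(a)/2 mod phi(a).  By the classical description of E*_a,
  n is not in E*_a iff some u, v with u v | n satisfy a | u + v; writing u and v as products of
  disjoint sub-multisets of the prime factors of n, this asks for a signed subsum of their indices
  congruent to phi(a)/2 mod phi(a).  The residues in H are exactly those whose index is divisible
  by 2^m, and every element of H is the residue of a prime factor of n; so the question is whether
  some signed subsum of the indices of the primes in T is congruent to 2^(m-1) mod 2^m.

  These indices are not divisible by 2^m.  Pairing two odd numbers x, y into x + y or x - y,
  keeping even numbers, halving and recursing shows that 2^(m-1) such numbers always have a signed
  subsum congruent to 2^(m-1) mod 2^m, and that 2^(m-1) - 1 of them have one unless all are
  congruent to e or -e for a single odd e.  In that case every signed subsum is congruent to e j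
  with |j| < 2^(m-1), which is never 2^(m-1) mod 2^m.
*)

section \<open>Signed subsums of integer multisets\<close>

definition signed_subsums :: "int multiset \<Rightarrow> int set" where
  "signed_subsums X = {sum_mset A - sum_mset B | A B. A + B \<subseteq># X}"

lemma signed_subsums_empty [simp]: "signed_subsums {#} = {0}"
  by (auto simp: signed_subsums_def)

lemma zero_in_signed_subsums [simp]: "0 \<in> signed_subsums X"
  unfolding signed_subsums_def by (rule CollectI, rule exI[of _ "{#}"], rule exI[of _ "{#}"]) simp

lemma signed_subsums_add_mset:
  "s \<in> signed_subsums (add_mset x X) \<longleftrightarrow>
     s \<in> signed_subsums X \<or> s - x \<in> signed_subsums X \<or> s + x \<in> signed_subsums X"
proof
  assume "s \<in> signed_subsums (add_mset x X)"
  then obtain A B where s: "s = sum_mset A - sum_mset B" and sub: "A + B \<subseteq># add_mset x X"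
    unfolding signed_subsums_def by blast
  consider "x \<in># A" | "x \<in># B" | "x \<notin># A + B" by auto
  then show "s \<in> signed_subsums X \<or> s - x \<in> signed_subsums X \<or> s + x \<in> signed_subsums X"
  proof cases
    case 1
    then obtain A' where "A = add_mset x A'" by (metis insert_DiffM)
    with s sub have "s - x = sum_mset A' - sum_mset B \<and> A' + B \<subseteq># X" by simp
    then show ?thesis unfolding signed_subsums_def by blast
  next
    case 2
    then obtain B' where "B = add_mset x B'" by (metis insert_DiffM)
    with s sub have "s + x = sum_mset A - sum_mset B' \<and> A + B' \<subseteq># X" by simp
    then show ?thesis unfolding signed_subsums_def by blast
  next
    case 3
    with sub have "A + B \<subseteq># X" by (metis Diff_eq_empty_iff_mset minus_add_mset_if_not_in_lhs)
    with s show ?thesis unfolding signed_subsums_def by blast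
  qed
next
  assume "s \<in> signed_subsums X \<or> s - x \<in> signed_subsums X \<or> s + x \<in> signed_subsums X"
  then obtain A B where sub: "A + B \<subseteq># X"
    and "s = sum_mset A - sum_mset B \<or> s - x = sum_mset A - sum_mset B \<or> s + x = sum_mset A - sum_mset B"
    unfolding signed_subsums_def by blast
  then have "s = sum_mset A - sum_mset B \<or> s = sum_mset (add_mset x A) - sum_mset B \<or>
      s = sum_mset A - sum_mset (add_mset x B)"
    by auto
  moreover from sub have "A + B \<subseteq># add_mset x X" "add_mset x A + B \<subseteq># add_mset x X"
    "A + add_mset x B \<subseteq># add_mset x X"
    by (auto intro: subset_mset.order_trans)
  ultimately show "s \<in> signed_subsums (add_mset x X)"
    unfolding signed_subsums_def by blast
qed

lemma signed_subsums_image_msetD: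
  assumes "s \<in> signed_subsums (image_mset f M)"
  shows "\<exists>A B. A + B \<subseteq># M \<and> s = sum_mset (image_mset f A) - sum_mset (image_mset f B)"
  using assms
proof (induction M arbitrary: s)
  case (add x M)
  from add.prems have "s \<in> signed_subsums (image_mset f M) \<or> s - f x \<in> signed_subsums (image_mset f M) \<or>
      s + f x \<in> signed_subsums (image_mset f M)"
    by (simp add: signed_subsums_add_mset)
  then obtain A B where AB: "A + B \<subseteq># M"
    and "s = sum_mset (image_mset f A) - sum_mset (image_mset f B) \<or>
      s = sum_mset (image_mset f (add_mset x A)) - sum_mset (image_mset f B) \<or>
      s = sum_mset (image_mset f A) - sum_mset (image_mset f (add_mset x B))"
    using add.IH by (fastforce simp: algebra_simps)
  moreover from AB have "A + B \<subseteq># add_mset x M" "add_mset x A + B \<subseteq># add_mset x M"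
    "A + add_mset x B \<subseteq># add_mset x M"
    by (auto intro: subset_mset.order_trans)
  ultimately show ?case by blast
qed force

lemma signed_subsums_image_mset:
  "signed_subsums (image_mset f M) =
     {sum_mset (image_mset f A) - sum_mset (image_mset f B) | A B. A + B \<subseteq># M}"
proof (intro antisym subsetI)
  fix s assume "s \<in> {sum_mset (image_mset f A) - sum_mset (image_mset f B) | A B. A + B \<subseteq># M}"
  then obtain A B where "s = sum_mset (image_mset f A) - sum_mset (image_mset f B)" "A + B \<subseteq># M"
    by blast
  moreover from \<open>A + B \<subseteq># M\<close> have "image_mset f A + image_mset f B \<subseteq># image_mset f M"
    by (metis image_mset_subseteq_mono image_mset_union)
  ultimately show "s \<in> signed_subsums (image_mset f M)"
    unfolding signed_subsums_def by blast
qed (use signed_subsums_image_msetD in blast)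

lemma signed_subsums_mult:
  "signed_subsums (image_mset (\<lambda>y. c * y) Y) = (\<lambda>s. c * s) ` signed_subsums Y"
proof -
  have sum_mult: "sum_mset (image_mset (\<lambda>y. c * y) A) = c * sum_mset A" for A :: "int multiset"
    by (induction A) (simp_all add: algebra_simps)
  have "sum_mset (image_mset (\<lambda>y. c * y) A) - sum_mset (image_mset (\<lambda>y. c * y) B) =
      c * (sum_mset A - sum_mset B)" for A B
    by (simp add: sum_mult right_diff_distrib)
  then show ?thesis
    unfolding signed_subsums_image_mset by (auto simp: signed_subsums_def)
qed

lemma signed_subsums_mono_add_mset:
  "signed_subsums X \<subseteq> signed_subsums X' \<Longrightarrow>
     signed_subsums (add_mset x X) \<subseteq> signed_subsums (add_mset x X')"
  by (auto simp: signed_subsums_add_mset)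

lemma signed_subsums_mono_union:
  "signed_subsums Y \<subseteq> signed_subsums Y' \<Longrightarrow> signed_subsums (X + Y) \<subseteq> signed_subsums (X + Y')"
  by (induction X) (simp_all add: signed_subsums_mono_add_mset)

lemma signed_subsums_merge:
  assumes "c = a + b \<or> c = a - b"
  shows "signed_subsums (add_mset c X) \<subseteq> signed_subsums (add_mset a (add_mset b X))"
  using assms by (auto simp: signed_subsums_add_mset algebra_simps)

lemma signed_subsums_union:
  "s \<in> signed_subsums (X + Y) \<Longrightarrow> \<exists>s'\<in>signed_subsums X. \<exists>s''\<in>signed_subsums Y. s = s' + s''"
proof (induction Y arbitrary: s)
  case empty
  then show ?case by simp
next
  case (add y Y)
  then have "s \<in> signed_subsums (X + Y) \<or> s - y \<in> signed_subsums (X + Y) \<or> s + y \<in> signed_subsums (X + Y)"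
    by (simp add: signed_subsums_add_mset)
  then obtain s' t where "s' \<in> signed_subsums X" "t \<in> signed_subsums Y" "s = s' + t \<or> s - y = s' + t \<or> s + y = s' + t"
    using add.IH by blast
  moreover have "t \<in> signed_subsums (add_mset y Y)" "t + y \<in> signed_subsums (add_mset y Y)"
    "t - y \<in> signed_subsums (add_mset y Y)"
    using \<open>t \<in> signed_subsums Y\<close> by (simp_all add: signed_subsums_add_mset)
  ultimately show ?case
    by (metis add.assoc add_diff_cancel diff_add_cancel add_diff_eq)
qed

lemma signed_subsums_dvd:
  "\<forall>x\<in>#X. c dvd x \<Longrightarrow> s \<in> signed_subsums X \<Longrightarrow> c dvd s"
proof (induction X arbitrary: s)
  case (add x X)
  then have "c dvd x" by simp
  moreover from add have "c dvd s \<or> c dvd s - x \<or> c dvd s + x"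
    by (auto simp: signed_subsums_add_mset)
  ultimately show ?case
    by (metis diff_add_cancel add_diff_cancel dvd_add dvd_diff)
qed simp

lemma mem_signed_subsums:
  assumes "x \<in># X"
  shows "x \<in> signed_subsums X"
proof -
  from assms obtain X' where "X = add_mset x X'" by (metis insert_DiffM)
  then show ?thesis by (simp add: signed_subsums_add_mset)
qed

section \<open>Signed subsums congruent to a power of two\<close>

lemma odd_sum_or_diff_not_dvd:
  fixes a b :: int
  assumes "odd a"
  obtains c where "c = a + b \<or> c = a - b" "\<not> 2 ^ Suc (Suc k) dvd c"
proof -
  have "(4::int) dvd 2 ^ Suc (Suc k)" by simp
  moreover have "\<not> (4 dvd a + b \<and> 4 dvd a - b)" using assms by presburger
  ultimately have "\<not> (2 ^ Suc (Suc k) dvd a + b \<and> 2 ^ Suc (Suc k) dvd a - b)"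
    by (meson dvd_trans)
  with that show thesis by blast
qed

lemma odd_sum_or_diff_four_dvd:
  fixes a b :: int
  assumes "odd a" "odd b" "\<not> [b = a] (mod 2 ^ Suc (Suc k))" "\<not> [b = - a] (mod 2 ^ Suc (Suc k))"
  obtains c where "c = a + b \<or> c = a - b" "4 dvd c" "\<not> 2 ^ Suc (Suc k) dvd c"
proof -
  have "4 dvd a + b \<or> 4 dvd a - b"
    using assms(1,2) by presburger
  moreover have "\<not> 2 ^ Suc (Suc k) dvd a + b" "\<not> 2 ^ Suc (Suc k) dvd a - b"
    using assms(3,4) by (simp_all add: cong_iff_dvd_diff dvd_diff_commute add.commute)
  ultimately show thesis using that by blast
qed

(* Two odd elements are merged into their sum or difference, whichever is not divisible
   by 2^(k+2). *)
lemma signed_subsums_pair_up_odd: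
  fixes X :: "int multiset"
  assumes "\<forall>x\<in>#X. odd x"
  shows "\<exists>Z. (\<forall>z\<in>#Z. even z \<and> \<not> 2 ^ Suc (Suc k) dvd z) \<and> signed_subsums Z \<subseteq> signed_subsums X \<and>
    size X \<le> 2 * size Z + 1"
  using assms
proof (induction "size X" arbitrary: X rule: less_induct)
  case less
  show ?case
  proof (cases "size X \<le> 1")
    case True
    then show ?thesis by (intro exI[of _ "{#}"]) simp
  next
    case False
    then obtain a X1 where X1: "X = add_mset a X1" and "X1 \<noteq> {#}"
      by (cases X) auto
    then obtain b X' where X: "X = add_mset a (add_mset b X')"
      by (cases X1) auto
    with less.prems have "odd a" "odd b" by auto
    then obtain c where c: "c = a + b \<or> c = a - b" "\<not> 2 ^ Suc (Suc k) dvd c"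
      using odd_sum_or_diff_not_dvd by blast
    with \<open>odd a\<close> \<open>odd b\<close> have "even c" by auto
    from X less obtain Z' where Z': "\<forall>z\<in>#Z'. even z \<and> \<not> 2 ^ Suc (Suc k) dvd z"
      "signed_subsums Z' \<subseteq> signed_subsums X'" "size X' \<le> 2 * size Z' + 1"
      by force
    have "signed_subsums (add_mset c Z') \<subseteq> signed_subsums (add_mset c X')"
      using Z'(2) by (rule signed_subsums_mono_add_mset)
    also have "\<dots> \<subseteq> signed_subsums X"
      unfolding X using c(1) by (rule signed_subsums_merge)
    finally show ?thesis
      using Z'(1,3) c(2) \<open>even c\<close> X by (intro exI[of _ "add_mset c Z'"]) auto
  qed
qed

lemma signed_subsums_pair_up:
  fixes X :: "int multiset"
  assumes "\<forall>x\<in>#X. \<not> 2 ^ Suc (Suc k) dvd x"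
  shows "\<exists>Z. (\<forall>z\<in>#Z. even z \<and> \<not> 2 ^ Suc (Suc k) dvd z) \<and> signed_subsums Z \<subseteq> signed_subsums X \<and>
    size X \<le> 2 * size Z + of_bool (\<forall>x\<in>#X. odd x)"
proof -
  let ?E = "filter_mset even X" and ?O = "filter_mset odd X"
  obtain Z' where Z': "\<forall>z\<in>#Z'. even z \<and> \<not> 2 ^ Suc (Suc k) dvd z"
    "signed_subsums Z' \<subseteq> signed_subsums ?O" "size ?O \<le> 2 * size Z' + 1"
    using signed_subsums_pair_up_odd[of ?O k] by auto
  have "signed_subsums (?E + Z') \<subseteq> signed_subsums (?E + ?O)"
    using Z'(2) by (rule signed_subsums_mono_union)
  also have "?E + ?O = X"
    using multiset_partition[of X even] by simp
  finally have "signed_subsums (?E + Z') \<subseteq> signed_subsums X" .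
  moreover have "size X \<le> 2 * size (?E + Z') + of_bool (\<forall>x\<in>#X. odd x)"
  proof (cases "?E = {#}")
    case True
    have "?O = X" using \<open>?E + ?O = X\<close> unfolding True by simp
    moreover from True have "\<forall>x\<in>#X. odd x" by auto
    ultimately show ?thesis using Z'(3) unfolding True by simp
  next
    case False
    then have "size ?E \<noteq> 0" by (simp only: size_eq_0_iff_empty not_False_eq_True)
    moreover have "size X = size ?E + size ?O"
      using \<open>?E + ?O = X\<close> size_union[of ?E ?O] by simp
    moreover have "size (?E + Z') = size ?E + size Z'" by simp
    ultimately show ?thesis using Z'(3) by linarith
  qed
  ultimately show ?thesis
    using Z'(1) assms by (intro exI[of _ "?E + Z'"]) auto
qed

lemma signed_subsums_pair_up_four_dvd:
  fixes X :: "int multiset"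
  assumes "\<forall>x\<in>#X. odd x"
    and "\<not> (\<exists>e. odd e \<and> (\<forall>x\<in>#X. [x = e] (mod 2 ^ Suc (Suc k)) \<or> [x = - e] (mod 2 ^ Suc (Suc k))))"
  shows "\<exists>Z. (\<forall>z\<in>#Z. even z \<and> \<not> 2 ^ Suc (Suc k) dvd z) \<and> signed_subsums Z \<subseteq> signed_subsums X \<and>
    size X \<le> 2 * size Z + 1 \<and> (\<exists>z\<in>#Z. 4 dvd z)"
proof -
  obtain a X1 where X1: "X = add_mset a X1"
    using assms(2) by (cases X) (auto dest: spec[of _ 1])
  with assms have "odd a" by simp
  with assms(2) X1 obtain b where "b \<in># X1"
    "\<not> [b = a] (mod 2 ^ Suc (Suc k))" "\<not> [b = - a] (mod 2 ^ Suc (Suc k))"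
    by auto
  then obtain X' where X: "X = add_mset a (add_mset b X')"
    using X1 by (metis insert_DiffM)
  with assms(1) have "odd b" by simp
  with \<open>odd a\<close> obtain c where c: "c = a + b \<or> c = a - b" "4 dvd c" "\<not> 2 ^ Suc (Suc k) dvd c"
    using odd_sum_or_diff_four_dvd \<open>\<not> [b = a] (mod 2 ^ Suc (Suc k))\<close>
      \<open>\<not> [b = - a] (mod 2 ^ Suc (Suc k))\<close> by blast
  obtain Z' where Z': "\<forall>z\<in>#Z'. even z \<and> \<not> 2 ^ Suc (Suc k) dvd z"
    "signed_subsums Z' \<subseteq> signed_subsums X'" "size X' \<le> 2 * size Z' + 1"
    using signed_subsums_pair_up_odd[of X' k] assms(1) X by auto
  have "signed_subsums (add_mset c Z') \<subseteq> signed_subsums (add_mset c X')"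
    using Z'(2) by (rule signed_subsums_mono_add_mset)
  also have "\<dots> \<subseteq> signed_subsums X"
    unfolding X using c(1) by (rule signed_subsums_merge)
  finally show ?thesis
    using Z'(1,3) c(2,3) X by (intro exI[of _ "add_mset c Z'"]) (auto elim: dvd_trans[rotated])
qed

lemma dvd_half_iff:
  fixes z c :: int
  assumes "even z"
  shows "c dvd z div 2 \<longleftrightarrow> 2 * c dvd z"
  using assms by (auto elim!: evenE)

lemma cong_double_pow2:
  fixes s :: int
  assumes "[s = 2 ^ k] (mod 2 ^ Suc k)"
  shows "[2 * s = 2 ^ Suc k] (mod 2 ^ Suc (Suc k))"
proof -
  from assms have "2 ^ Suc k dvd s - 2 ^ k"
    by (simp only: cong_iff_dvd_diff)
  then have "2 * 2 ^ Suc k dvd 2 * (s - 2 ^ k)"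
    by (rule mult_dvd_mono[OF dvd_refl])
  then show ?thesis
    by (simp only: cong_iff_dvd_diff power_Suc right_diff_distrib)
qed

lemma signed_subsums_halves:
  assumes "\<forall>z\<in>#Z. even z"
  shows "signed_subsums Z = (\<lambda>s. 2 * s) ` signed_subsums (image_mset (\<lambda>z. z div 2) Z)"
proof -
  from assms have "image_mset (\<lambda>y. 2 * y) (image_mset (\<lambda>z. z div 2) Z) = Z"
    by (induction Z) auto
  then show ?thesis
    using signed_subsums_mult[of 2 "image_mset (\<lambda>z. z div 2) Z"] by simp
qed

lemma exact_pow2_from_halves:
  assumes "\<forall>z\<in>#Z. even z" "signed_subsums Z \<subseteq> signed_subsums X"
    and "s \<in> signed_subsums (image_mset (\<lambda>z. z div 2) Z)" "[s = 2 ^ k] (mod 2 ^ Suc k)"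
  shows "\<exists>t\<in>signed_subsums X. [t = 2 ^ Suc k] (mod 2 ^ Suc (Suc k))"
proof -
  have "2 * s \<in> signed_subsums Z"
    unfolding signed_subsums_halves[OF assms(1)] using assms(3) by (rule imageI)
  with assms(2) cong_double_pow2[OF assms(4)] show ?thesis by blast
qed

lemma halves_not_dvd:
  assumes "\<forall>z\<in>#Z. even z \<and> \<not> 2 ^ Suc (Suc k) dvd z"
  shows "\<forall>y\<in>#image_mset (\<lambda>z. z div 2) Z. \<not> (2::int) ^ Suc k dvd y"
  using assms by (auto simp: dvd_half_iff)

lemma signed_subsum_exact_pow2:
  fixes X :: "int multiset"
  assumes "\<forall>x\<in>#X. \<not> 2 ^ Suc k dvd x" and "2 ^ k \<le> size X"
  shows "\<exists>s\<in>signed_subsums X. [s = 2 ^ k] (mod 2 ^ Suc k)"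
  using assms
proof (induction k arbitrary: X)
  case 0
  then obtain x X' where "X = add_mset x X'" by (cases X) auto
  with 0 have "x \<in> signed_subsums X" "odd x" by (auto simp: mem_signed_subsums)
  then show ?case by (auto simp: cong_def odd_iff_mod_2_eq_one)
next
  case (Suc k)
  obtain Z where Z: "\<forall>z\<in>#Z. even z \<and> \<not> 2 ^ Suc (Suc k) dvd z"
    "signed_subsums Z \<subseteq> signed_subsums X" "size X \<le> 2 * size Z + of_bool (\<forall>x\<in>#X. odd x)"
    using signed_subsums_pair_up[OF Suc.prems(1)] by blast
  moreover have "of_bool (\<forall>x\<in>#X. odd x) \<le> (1::nat)" by (rule of_bool_less_eq_one)
  ultimately have "size X \<le> 2 * size Z + 1" by linarith
  with Suc.prems(2) have "2 ^ k \<le> size (image_mset (\<lambda>z. z div 2) Z)" by simp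
  with Suc.IH halves_not_dvd[OF Z(1)] obtain s
    where "s \<in> signed_subsums (image_mset (\<lambda>z. z div 2) Z)" "[s = 2 ^ k] (mod 2 ^ Suc k)"
    by blast
  moreover from Z(1) have "\<forall>z\<in>#Z. even z" by blast
  ultimately show ?case using Z(2) by (intro exact_pow2_from_halves)
qed

lemma even_member_not_pm:
  fixes Y :: "int multiset"
  assumes "y \<in># Y" "even y"
  shows "\<not> (\<exists>e. odd e \<and> (\<forall>x\<in>#Y. [x = e] (mod 2 ^ Suc k) \<or> [x = - e] (mod 2 ^ Suc k)))"
proof
  assume "\<exists>e. odd e \<and> (\<forall>x\<in>#Y. [x = e] (mod 2 ^ Suc k) \<or> [x = - e] (mod 2 ^ Suc k))"
  then obtain e where "odd e" "[y = e] (mod 2 ^ Suc k) \<or> [y = - e] (mod 2 ^ Suc k)"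
    using assms(1) by blast
  moreover have "(2::int) dvd 2 ^ Suc k" by simp
  ultimately have "[y = e] (mod 2) \<or> [y = - e] (mod 2)"
    by (metis cong_dvd_modulus)
  with \<open>odd e\<close> \<open>even y\<close> show False
    by (auto simp: cong_iff_dvd_diff)
qed

lemma signed_subsum_exact_pow2_unless_pm:
  fixes X :: "int multiset"
  assumes "\<forall>x\<in>#X. \<not> 2 ^ Suc k dvd x" and "2 ^ k \<le> size X + 1"
    and "\<not> (\<exists>e. odd e \<and> (\<forall>x\<in>#X. [x = e] (mod 2 ^ Suc k) \<or> [x = - e] (mod 2 ^ Suc k)))"
  shows "\<exists>s\<in>signed_subsums X. [s = 2 ^ k] (mod 2 ^ Suc k)"
  using assms
proof (induction k arbitrary: X)
  case 0
  have "[x = 1] (mod 2 ^ Suc 0)" if "x \<in># X" for x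
    using "0.prems"(1) that by (simp add: cong_def odd_iff_mod_2_eq_one)
  then have "odd (1::int) \<and> (\<forall>x\<in>#X. [x = 1] (mod 2 ^ Suc 0) \<or> [x = - 1] (mod 2 ^ Suc 0))"
    by simp
  with "0.prems"(3) show ?case by blast
next
  case (Suc k)
  let ?half = "image_mset (\<lambda>z. z div 2)"
  have "\<exists>Z. (\<forall>z\<in>#Z. even z \<and> \<not> 2 ^ Suc (Suc k) dvd z) \<and> signed_subsums Z \<subseteq> signed_subsums X \<and>
      (\<exists>s\<in>signed_subsums (?half Z). [s = 2 ^ k] (mod 2 ^ Suc k))"
  proof (cases "\<forall>x\<in>#X. odd x")
    case False
    obtain Z where Z: "\<forall>z\<in>#Z. even z \<and> \<not> 2 ^ Suc (Suc k) dvd z"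
      "signed_subsums Z \<subseteq> signed_subsums X" "size X \<le> 2 * size Z + of_bool (\<forall>x\<in>#X. odd x)"
      using signed_subsums_pair_up[OF Suc.prems(1)] by blast
    moreover from False have "of_bool (\<forall>x\<in>#X. odd x) = (0::nat)"
      by (simp only: of_bool_eq_0_iff not_False_eq_True)
    ultimately have "size X \<le> 2 * size Z" by linarith
    with Suc.prems(2) have "2 ^ k \<le> size (?half Z)" by simp
    with Z(1,2) show ?thesis
      using signed_subsum_exact_pow2[OF halves_not_dvd[OF Z(1)]] by blast
  next
    case True
    then obtain Z where Z: "\<forall>z\<in>#Z. even z \<and> \<not> 2 ^ Suc (Suc k) dvd z"
      "signed_subsums Z \<subseteq> signed_subsums X" "size X \<le> 2 * size Z + 1" "\<exists>z\<in>#Z. 4 dvd z"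
      using signed_subsums_pair_up_four_dvd[OF True Suc.prems(3)] by blast
    from Z(4) obtain z where "z \<in># Z" "4 dvd z" by blast
    then have "z div 2 \<in># ?half Z" "even (z div 2)" by (auto elim!: dvdE)
    then have "\<not> (\<exists>e. odd e \<and> (\<forall>y\<in>#?half Z. [y = e] (mod 2 ^ Suc k) \<or> [y = - e] (mod 2 ^ Suc k)))"
      by (rule even_member_not_pm)
    moreover from Suc.prems(2) Z(3) have "2 ^ k \<le> size (?half Z) + 1" by simp
    ultimately show ?thesis
      using Z(1,2) Suc.IH[OF halves_not_dvd[OF Z(1)]] by blast
  qed
  then obtain Z s where "\<forall>z\<in>#Z. even z" "signed_subsums Z \<subseteq> signed_subsums X"
    "s \<in> signed_subsums (?half Z)" "[s = 2 ^ k] (mod 2 ^ Suc k)"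
    by blast
  then show ?case by (rule exact_pow2_from_halves)
qed

lemma signed_subsums_pm_cong:
  fixes X :: "int multiset"
  assumes "\<forall>x\<in>#X. [x = e] (mod M) \<or> [x = - e] (mod M)" and "s \<in> signed_subsums X"
  shows "\<exists>j. \<bar>j\<bar> \<le> int (size X) \<and> [s = e * j] (mod M)"
  using assms
proof (induction X arbitrary: s)
  case empty
  then show ?case by simp
next
  case (add x X)
  from add.prems(1) have "[x = e * 1] (mod M) \<or> [x = e * - 1] (mod M)" by simp
  then obtain \<sigma> :: int where \<sigma>: "\<bar>\<sigma>\<bar> = 1" "[x = e * \<sigma>] (mod M)"
    by (metis abs_1 abs_minus_cancel)
  from add.prems consider (keep) "s \<in> signed_subsums X" | (plus) "s - x \<in> signed_subsums X"
    | (minus) "s + x \<in> signed_subsums X"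
    by (auto simp: signed_subsums_add_mset)
  then show ?case
  proof cases
    case keep
    with add.IH add.prems(1) show ?thesis by force
  next
    case plus
    with add.IH add.prems(1) obtain j where j: "\<bar>j\<bar> \<le> int (size X)" "[s - x = e * j] (mod M)"
      by force
    have "[s - x + x = e * j + e * \<sigma>] (mod M)" using j(2) \<sigma>(2) by (rule cong_add)
    then have "[s = e * (j + \<sigma>)] (mod M)" by (simp add: distrib_left)
    moreover have "\<bar>j + \<sigma>\<bar> \<le> int (size (add_mset x X))" using j(1) \<sigma>(1) by simp
    ultimately show ?thesis by blast
  next
    case minus
    with add.IH add.prems(1) obtain j where j: "\<bar>j\<bar> \<le> int (size X)" "[s + x = e * j] (mod M)"
      by force
    have "[s + x - x = e * j - e * \<sigma>] (mod M)" using j(2) \<sigma>(2) by (rule cong_diff)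
    then have "[s = e * (j - \<sigma>)] (mod M)" by (simp add: right_diff_distrib)
    moreover have "\<bar>j - \<sigma>\<bar> \<le> int (size (add_mset x X))" using j(1) \<sigma>(1) by simp
    ultimately show ?thesis by blast
  qed
qed

lemma no_signed_subsum_exact_pow2:
  fixes X :: "int multiset"
  assumes "odd e" and "\<forall>x\<in>#X. [x = e] (mod 2 ^ Suc k) \<or> [x = - e] (mod 2 ^ Suc k)"
    and "size X < 2 ^ k" and "s \<in> signed_subsums X"
  shows "\<not> [s = 2 ^ k] (mod 2 ^ Suc k)"
proof
  assume s: "[s = 2 ^ k] (mod 2 ^ Suc k)"
  obtain j where j: "\<bar>j\<bar> \<le> int (size X)" "[s = e * j] (mod 2 ^ Suc k)"
    using signed_subsums_pm_cong[OF assms(2,4)] by blast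
  from j(2) s have "[e * j = 2 ^ k] (mod 2 ^ Suc k)"
    by (metis cong_sym cong_trans)
  then have "[e * j = 2 ^ k] (mod 2 ^ k)"
    by (rule cong_dvd_modulus) simp
  then have "2 ^ k dvd e * j"
    by (simp add: cong_0_iff[symmetric] cong_def)
  moreover have "coprime (2 ^ k) e" using assms(1) by simp
  ultimately have "2 ^ k dvd j" by (simp add: coprime_dvd_mult_right_iff)
  moreover have "int (size X) < 2 ^ k"
    using assms(3) by (metis of_nat_less_iff of_nat_numeral of_nat_power)
  with j(1) have "\<bar>j\<bar> < 2 ^ k" by linarith
  ultimately have "j = 0"
    using dvd_imp_le_int[of j "2 ^ k"] by fastforce
  with \<open>[e * j = 2 ^ k] (mod 2 ^ Suc k)\<close> show False
    by (simp add: cong_def)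
qed

section \<open>The exceptional set\<close>

lemma egyptian_eq_iff:
  fixes a n x y :: nat
  assumes "x > 0" "y > 0" "n > 0"
  shows "real a / real n = 1 / real x + 1 / real y \<longleftrightarrow> a * x * y = n * (x + y)"
proof -
  have "real a / real n = 1 / real x + 1 / real y \<longleftrightarrow>
      real a * real x * real y = real n * (real x + real y)"
    using assms by (simp add: field_simps)
  also have "\<dots> \<longleftrightarrow> a * x * y = n * (x + y)"
    by (metis of_nat_add of_nat_eq_iff of_nat_mult)
  finally show ?thesis .
qed

lemma egyptian_solution_bound:
  fixes a n x y :: nat
  assumes "a > 0" "x > 0" "y > 0" "x \<le> y" and eq: "a * x * y = n * (x + y)"
  shows "y \<le> 2 * n * n"
proof -
  have "x * y \<le> a * x * y" using assms(1) by simp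
  also have "\<dots> \<le> 2 * n * y" using eq assms(4) by (simp add: algebra_simps)
  finally have "x \<le> 2 * n" using assms(3) by simp
  have "y * (a * x - n) = n * x"
    using eq by (simp add: algebra_simps diff_mult_distrib2)
  moreover have "n * x > 0"
    using eq assms(1-3) by (cases n) auto
  ultimately have "y \<le> y * (a * x - n)" by (cases "a * x - n") auto
  also have "\<dots> \<le> n * (2 * n)" using \<open>y * (a * x - n) = n * x\<close> \<open>x \<le> 2 * n\<close> by simp
  finally show ?thesis by simp
qed

lemma finite_egyptian_solutions:
  fixes a n :: nat
  assumes "a > 0" "n > 0"
  shows "finite {(x :: nat, y :: nat). x > 0 \<and> y > 0 \<and> real a / real n = 1 / real x + 1 / real y}"
proof (rule finite_subset)
  have "x \<le> 2 * n * n \<and> y \<le> 2 * n * n" if "x > 0" "y > 0" "a * x * y = n * (x + y)" for x y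
    using egyptian_solution_bound[OF assms(1) that(1,2) _ that(3)]
      egyptian_solution_bound[OF assms(1) that(2,1)] that(3)
    by (metis add.commute le_cases le_trans mult.commute mult.left_commute)
  then show "{(x, y). x > 0 \<and> y > 0 \<and> real a / real n = 1 / real x + 1 / real y}
      \<subseteq> {..2 * n * n} \<times> {..2 * n * n}"
    using egyptian_eq_iff assms(2) by auto
qed simp

lemma R_eq_0_iff:
  fixes a n :: nat
  assumes "a > 0" "n > 0"
  shows "R n a = 0 \<longleftrightarrow> \<not> (\<exists>x y. x > 0 \<and> y > 0 \<and> a * x * y = n * (x + y))"
proof -
  have "{(x :: nat, y :: nat). x > 0 \<and> y > 0 \<and> real a / real n = 1 / real x + 1 / real y} =
      {(x, y). x > 0 \<and> y > 0 \<and> a * x * y = n * (x + y)}"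
    using egyptian_eq_iff assms(2) by blast
  with finite_egyptian_solutions[OF assms] show ?thesis
    unfolding R_def by auto
qed

lemma egyptian_solution_of_divisor_pair:
  fixes a n u v :: nat
  assumes "n > 0" "u > 0" "v > 0" "u * v dvd n" "a dvd u + v"
  shows "\<exists>x y. x > 0 \<and> y > 0 \<and> a * x * y = n * (x + y)"
proof -
  obtain k where k: "n = u * v * k" using assms(4) by blast
  obtain s where s: "u + v = a * s" using assms(5) by blast
  have "a * (s * k * u) * (s * k * v) = (a * s) * s * k * k * u * v"
    by (simp add: algebra_simps)
  also have "\<dots> = (u + v) * s * k * k * u * v"
    by (simp only: s)
  also have "\<dots> = n * (s * k * u + s * k * v)"
    by (simp add: k algebra_simps)
  finally have "a * (s * k * u) * (s * k * v) = n * (s * k * u + s * k * v)" .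
  moreover have "s > 0" "k > 0"
    using assms(1,2) s k by (auto intro!: gr0I)
  ultimately show ?thesis using assms(2,3) by (metis mult_pos_pos)
qed

lemma divisor_pair_of_egyptian_solution:
  fixes a n x y :: nat
  assumes "coprime n a" "x > 0" "y > 0" and eq: "a * x * y = n * (x + y)"
  shows "\<exists>u v. u > 0 \<and> v > 0 \<and> u * v dvd n \<and> a dvd u + v"
proof -
  define g where "g = gcd x y"
  have "g > 0" using assms(2) by (simp add: g_def)
  then obtain u v where uv: "x = u * g" "y = v * g" "coprime u v"
    using gcd_coprime_exists[of x y] unfolding g_def by blast
  have "u > 0" "v > 0" using uv assms(2,3) by auto
  from eq have "g * (a * g * u * v) = g * (n * (u + v))"
    by (simp add: uv algebra_simps)
  with \<open>g > 0\<close> have eq': "a * g * u * v = n * (u + v)"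
    by (simp only: mult_left_cancel neq0_conv)
  have "coprime u (u + v)" "coprime v (v + u)"
    using uv(3) by (simp_all only: coprime_iff_gcd_eq_1 gcd_add2 gcd.commute[of v u])
  then have "coprime (u * v) (u + v)" by (simp add: add.commute)
  moreover have "u * v dvd n * (u + v)"
    using eq' by (metis dvd_triv_right mult.assoc)
  ultimately have "u * v dvd n"
    by (simp add: coprime_dvd_mult_left_iff)
  then obtain k where k: "n = u * v * k" by blast
  with eq' have "(u * v) * (a * g) = (u * v) * (k * (u + v))"
    by (simp add: ac_simps)
  with \<open>u > 0\<close> \<open>v > 0\<close> have "a dvd k * (u + v)"
    by (metis dvd_triv_left mult_left_cancel mult_pos_pos neq0_conv)
  moreover have "coprime a k"
    using assms(1) k by (simp add: coprime_commute)
  ultimately have "a dvd u + v"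
    by (simp add: coprime_dvd_mult_right_iff)
  with \<open>u > 0\<close> \<open>v > 0\<close> \<open>u * v dvd n\<close> show ?thesis by blast
qed

lemma E_star_iff:
  fixes a n :: nat
  assumes "a > 0" "n > 0" "coprime n a"
  shows "n \<in> E_star a \<longleftrightarrow> \<not> (\<exists>u v. u > 0 \<and> v > 0 \<and> u * v dvd n \<and> a dvd u + v)"
proof -
  have "gcd n a = 1"
    using assms(3) by (simp only: coprime_iff_gcd_eq_1)
  with assms(2) have "n \<in> E_star a \<longleftrightarrow> R n a = 0"
    by (simp add: E_star_def)
  also have "\<dots> \<longleftrightarrow> \<not> (\<exists>x y. x > 0 \<and> y > 0 \<and> a * x * y = n * (x + y))"
    by (rule R_eq_0_iff[OF assms(1,2)])
  also have "\<dots> \<longleftrightarrow> \<not> (\<exists>u v. u > 0 \<and> v > 0 \<and> u * v dvd n \<and> a dvd u + v)"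
    using egyptian_solution_of_divisor_pair[OF assms(2)] divisor_pair_of_egyptian_solution[OF assms(3)]
    by blast
  finally show ?thesis .
qed

section \<open>The maximal subgroup of odd order of the units modulo a\<close>

lemma residues_int: "a > 1 \<Longrightarrow> residues (int a)"
  by (simp add: residues_def)

lemma unit_group_carrier:
  "a > 1 \<Longrightarrow> carrier (unit_group a) = {x. 0 < x \<and> x < int a \<and> coprime x (int a)}"
  by (simp add: unit_group_def units_of_carrier residues.res_units_eq residues_int)

lemma comm_group_unit_group:
  assumes "a > 1"
  shows "comm_group (unit_group a)"
proof -
  interpret residues "int a" "residue_ring (int a)"
    using assms by (rule residues_int)
  show ?thesis by (simp add: unit_group_def units_comm_group)
qed

lemma order_unit_group:
  assumes "a > 1"
  shows "order (unit_group a) = totient a"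
proof -
  interpret residues "int a" "residue_ring (int a)"
    using assms by (rule residues_int)
  show ?thesis using totient_eq by (simp add: order_def unit_group_def units_of_carrier)
qed

lemma one_unit_group: "a > 1 \<Longrightarrow> \<one>\<^bsub>unit_group a\<^esub> = 1"
  by (simp add: unit_group_def units_of_one residues.res_one_eq residues_int)

lemma pow_unit_group:
  assumes "a > 1" "x \<in> carrier (unit_group a)"
  shows "x [^]\<^bsub>unit_group a\<^esub> (n::nat) = x ^ n mod int a"
proof -
  interpret residues "int a" "residue_ring (int a)"
    using assms(1) by (rule residues_int)
  from assms have "x \<in> Units (residue_ring (int a))" "x mod int a = x"
    using unit_group_carrier[of a] by (auto simp: unit_group_def units_of_carrier)
  then show ?thesis
    using units_of_pow pow_cong[of x n] by (simp add: unit_group_def)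
qed

lemma mod_in_totatives:
  assumes "a > 1" "coprime y a"
  shows "y mod a \<in> totatives a"
proof -
  have "\<not> a dvd y"
    using assms coprime_common_divisor_nat[of y a a] by auto
  then have "y mod a > 0" by (simp add: dvd_eq_mod_eq_0)
  moreover have "coprime (y mod a) a"
    using assms by simp
  ultimately show ?thesis
    using assms(1) by (simp add: totatives_def less_imp_le)
qed

lemma mod_in_unit_group:
  assumes "a > 1" "coprime y a"
  shows "int y mod int a \<in> carrier (unit_group a)"
  using mod_in_totatives[OF assms] assms(1)
  by (auto simp: unit_group_carrier totatives_def zmod_int[symmetric])

lemma mod_pow_unit_group_eq_one_iff:
  assumes "a > 1" "coprime y a"
  shows "(int y mod int a) [^]\<^bsub>unit_group a\<^esub> (d::nat) = \<one>\<^bsub>unit_group a\<^esub> \<longleftrightarrow> [y ^ d = 1] (mod a)"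
proof -
  have "(int y mod int a) [^]\<^bsub>unit_group a\<^esub> d = (int y mod int a) ^ d mod int a"
    using assms by (simp add: pow_unit_group mod_in_unit_group)
  also have "\<dots> = int (y ^ d mod a)"
    by (simp add: of_nat_mod power_mod)
  finally show ?thesis
    using assms(1) by (simp add: one_unit_group cong_def)
qed

lemma (in comm_group) pow_eq_one_subgroup: "subgroup {x \<in> carrier G. x [^] (d::nat) = \<one>} G"
  by (rule subgroupI) (auto simp: nat_pow_inv nat_pow_distrib)

lemma (in group) subgroup_pow_eq_one:
  assumes "finite (carrier G)" "order G = c * d" "subgroup H G" "coprime (card H) c" "x \<in> H"
  shows "x [^] d = \<one>"
proof -
  interpret H: group "G\<lparr>carrier := H\<rparr>"
    using assms(3) by (rule subgroup_imp_group)
  have "x [^]\<^bsub>G\<lparr>carrier := H\<rparr>\<^esub> card H = \<one>"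
    using H.pow_order_eq_1 assms(1,3,5) by (simp add: order_def finite_subset subgroup.subset)
  then have "x [^] card H = \<one>"
    by (simp add: nat_pow_consistent[of x _ H])
  moreover have "card H dvd c * d"
    using lagrange[OF assms(3)] assms(2) by (metis dvd_triv_right)
  with assms(4) have "card H dvd d"
    using coprime_dvd_mult_right_iff by blast
  ultimately show ?thesis
    using assms(3,5) by (metis dvdE nat_pow_one nat_pow_pow subgroup.mem_carrier)
qed

lemma primroot_pow_unit_group_eq_one_iff:
  assumes "a > 1" "residue_primroot a g" "totient a = c * d" "d > 0"
    and "coprime y a" "[y = g ^ i] (mod a)"
  shows "(int y mod int a) [^]\<^bsub>unit_group a\<^esub> d = \<one>\<^bsub>unit_group a\<^esub> \<longleftrightarrow> c dvd i"
proof -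
  have "(int y mod int a) [^]\<^bsub>unit_group a\<^esub> d = \<one>\<^bsub>unit_group a\<^esub> \<longleftrightarrow> [y ^ d = 1] (mod a)"
    using assms(1,5) by (rule mod_pow_unit_group_eq_one_iff)
  also have "\<dots> \<longleftrightarrow> [g ^ (i * d) = 1] (mod a)"
    using cong_pow[OF assms(6), of d] by (metis cong_sym cong_trans power_mult)
  also have "\<dots> \<longleftrightarrow> ord a g dvd i * d"
    by (rule ord_divides)
  also have "\<dots> \<longleftrightarrow> c * d dvd i * d"
    using assms(2,3) by (simp add: residue_primroot_def)
  also have "\<dots> \<longleftrightarrow> c dvd i"
    using assms(4) by simp
  finally show ?thesis .
qed

lemma inj_on_primroot_powers:
  assumes "a > 1" "residue_primroot a g" "totient a = c * d"
  shows "inj_on (\<lambda>j. int (g ^ (c * j) mod a)) {..<d}"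
proof (rule inj_onI)
  fix i j assume ij: "i \<in> {..<d}" "j \<in> {..<d}" "int (g ^ (c * i) mod a) = int (g ^ (c * j) mod a)"
  have "c > 0"
    using assms(1,3) totient_gt_0_iff[of a] by (cases c) auto
  from ij(3) have "g ^ (c * i) mod a = g ^ (c * j) mod a"
    by simp
  moreover have "c * i \<in> {..<totient a}" "c * j \<in> {..<totient a}"
    using ij(1,2) \<open>c > 0\<close> assms(3) by simp_all
  ultimately have "c * i = c * j"
    by (rule inj_onD[OF bij_betw_imp_inj_on[OF residue_primroot_is_generator[OF assms(1,2)]]])
  with \<open>c > 0\<close> show "i = j" by simp
qed

lemma pow_eq_one_unit_group_primroot:
  assumes "a > 1" "residue_primroot a g" "totient a = c * d" "d > 0"
  shows "{x \<in> carrier (unit_group a). x [^]\<^bsub>unit_group a\<^esub> d = \<one>\<^bsub>unit_group a\<^esub>} =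
    (\<lambda>j. int (g ^ (c * j) mod a)) ` {..<d}"
proof (intro antisym subsetI)
  fix x assume "x \<in> {x \<in> carrier (unit_group a). x [^]\<^bsub>unit_group a\<^esub> d = \<one>\<^bsub>unit_group a\<^esub>}"
  then have x: "0 < x" "x < int a" "coprime (nat x) a" "x [^]\<^bsub>unit_group a\<^esub> d = \<one>\<^bsub>unit_group a\<^esub>"
    using assms(1) by (auto simp: unit_group_carrier coprime_int_iff[symmetric])
  then have "nat x \<in> totatives a" by (auto simp: totatives_def)
  then obtain i where i: "i < totient a" "g ^ i mod a = nat x"
    unfolding bij_betw_imp_surj_on[OF residue_primroot_is_generator[OF assms(1,2)], symmetric] by auto
  have x_eq: "x = int (nat x) mod int a" using x by simp
  have "[nat x = g ^ i] (mod a)"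
    using i(2) x(2) by (simp add: cong_def flip: i(2))
  moreover have "(int (nat x) mod int a) [^]\<^bsub>unit_group a\<^esub> d = \<one>\<^bsub>unit_group a\<^esub>"
    using x(4) x_eq by simp
  ultimately have "c dvd i"
    using primroot_pow_unit_group_eq_one_iff[OF assms x(3)] by blast
  then obtain j where "i = c * j" by blast
  with i assms(3) x(1) have "j < d" "int (g ^ (c * j) mod a) = x"
    by auto
  then show "x \<in> (\<lambda>j. int (g ^ (c * j) mod a)) ` {..<d}" by force
next
  fix x assume "x \<in> (\<lambda>j. int (g ^ (c * j) mod a)) ` {..<d}"
  then obtain j where x: "x = int (g ^ (c * j) mod a)" by blast
  have cop: "coprime (g ^ i) a" for i
    using assms(2) by (simp add: residue_primroot_def coprime_commute)
  show "x \<in> {x \<in> carrier (unit_group a). x [^]\<^bsub>unit_group a\<^esub> d = \<one>\<^bsub>unit_group a\<^esub>}"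
    using primroot_pow_unit_group_eq_one_iff[OF assms cop[of "c * j"] cong_refl]
      mod_in_unit_group[OF assms(1) cop] by (simp add: x zmod_int)
qed

lemma card_pow_eq_one_unit_group:
  assumes "a > 1" "residue_primroot a g" "totient a = c * d" "d > 0"
  shows "card {x \<in> carrier (unit_group a). x [^]\<^bsub>unit_group a\<^esub> d = \<one>\<^bsub>unit_group a\<^esub>} = d"
  using pow_eq_one_unit_group_primroot[OF assms] inj_on_primroot_powers[OF assms(1-3)]
  by (simp add: card_image)

lemma maximal_odd_subgroup_unit_group:
  assumes "a > 1" "residue_primroot a g" "totient a = 2 ^ m * d" "odd d"
    and "subgroup H (unit_group a)" "odd (card H)"
    and "\<forall>K. subgroup K (unit_group a) \<and> odd (card K) \<and> H \<subseteq> K \<longrightarrow> K = H"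
  shows "H = {x \<in> carrier (unit_group a). x [^]\<^bsub>unit_group a\<^esub> d = \<one>\<^bsub>unit_group a\<^esub>}"
proof -
  interpret comm_group "unit_group a"
    using assms(1) by (rule comm_group_unit_group)
  let ?K = "{x \<in> carrier (unit_group a). x [^]\<^bsub>unit_group a\<^esub> d = \<one>\<^bsub>unit_group a\<^esub>}"
  have fin: "finite (carrier (unit_group a))"
    using order_unit_group[OF assms(1)] assms(1) by (intro card_ge_0_finite) (simp add: order_def)
  have ord: "order (unit_group a) = 2 ^ m * d" and cop: "coprime (card H) (2 ^ m)"
    using order_unit_group[OF assms(1)] assms(3,6) by simp_all
  have "H \<subseteq> ?K"
    using subgroup_pow_eq_one[OF fin ord assms(5) cop] assms(5) by (auto simp: subgroup.mem_carrier)
  moreover have "odd (card ?K)"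
    using card_pow_eq_one_unit_group[OF assms(1-3)] assms(4) by (simp add: odd_pos)
  ultimately show ?thesis
    using assms(7) pow_eq_one_subgroup by blast
qed

lemma mem_maximal_odd_subgroup_iff:
  assumes "a > 1" "residue_primroot a g" "totient a = 2 ^ m * d" "odd d"
    and "subgroup H (unit_group a)" "odd (card H)"
    and "\<forall>K. subgroup K (unit_group a) \<and> odd (card K) \<and> H \<subseteq> K \<longrightarrow> K = H"
    and "coprime r a" "[r = g ^ k] (mod a)"
  shows "int r mod int a \<in> H \<longleftrightarrow> 2 ^ m dvd k"
  using maximal_odd_subgroup_unit_group[OF assms(1-7)] mod_in_unit_group[OF assms(1,8)]
    primroot_pow_unit_group_eq_one_iff[OF assms(1-3) odd_pos[OF assms(4)] assms(8,9)]
  by blast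

section \<open>Indices with respect to a primitive root\<close>

(* Only meaningful for x coprime to a: otherwise LEAST ranges over an empty set. *)
definition discrete_log :: "nat \<Rightarrow> nat \<Rightarrow> nat \<Rightarrow> nat" where
  "discrete_log a g x = (LEAST k. [x = g ^ k] (mod a))"

lemma discrete_log_cong:
  assumes "a > 1" "residue_primroot a g" "coprime x a"
  shows "[x = g ^ discrete_log a g x] (mod a)"
proof -
  from assms(1,3) have "x mod a \<in> totatives a" by (rule mod_in_totatives)
  then obtain k where "x mod a = g ^ k mod a"
    using residue_primroot_is_generator[OF assms(1,2)] by (auto simp: bij_betw_def)
  then have "\<exists>k. [x = g ^ k] (mod a)" by (auto simp: cong_def)
  then show ?thesis
    unfolding discrete_log_def by (rule LeastI_ex)
qed

lemma primroot_power_cong_iff: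
  assumes "residue_primroot a g"
  shows "[g ^ i = g ^ j] (mod a) \<longleftrightarrow> [int i = int j] (mod int (totient a))"
proof -
  from assms have "coprime a g" "ord a g = totient a"
    by (simp_all add: residue_primroot_def)
  then show ?thesis
    using order_divides_expdiff[of a g i j] by (simp add: cong_int_iff)
qed

lemma prod_mset_cong_power_sum:
  fixes a g :: nat
  shows "\<forall>r\<in>#C. [r = g ^ k r] (mod a) \<Longrightarrow> [prod_mset C = g ^ sum_mset (image_mset k C)] (mod a)"
proof (induction C)
  case (add x C)
  then have "[x * prod_mset C = g ^ k x * g ^ sum_mset (image_mset k C)] (mod a)"
    by (intro cong_mult) auto
  then show ?case by (simp add: power_add)
qed simp

lemma odd_prime_power_dvd_mult_pm_one:
  fixes h :: int
  assumes "prime p" "odd p" "int (p ^ \<gamma>) dvd (h - 1) * (h + 1)"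
  shows "int (p ^ \<gamma>) dvd h - 1 \<or> int (p ^ \<gamma>) dvd h + 1"
proof -
  have "\<not> (int p dvd h - 1 \<and> int p dvd h + 1)"
  proof
    assume "int p dvd h - 1 \<and> int p dvd h + 1"
    then have "int p dvd (h + 1) - (h - 1)" by (meson dvd_diff)
    then have "int p dvd 2" by simp
    then have "p dvd 2" by presburger
    with assms(1,2) show False
      using prime_ge_2_nat[OF assms(1)] by (metis dvd_imp_le dvd_refl le_antisym zero_less_numeral)
  qed
  moreover have "coprime (int (p ^ \<gamma>)) x" if "\<not> int p dvd x" for x
    using that assms(1) by (simp add: prime_imp_coprime coprime_power_left_iff)
  ultimately show ?thesis
    using assms(3) by (metis coprime_dvd_mult_left_iff coprime_dvd_mult_right_iff)
qed

lemma odd_prime_power_gt_2: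
  fixes p \<gamma> :: nat
  assumes "prime p" "odd p" "\<gamma> \<ge> 1"
  shows "p ^ \<gamma> > 2"
proof -
  have "p \<ge> 3" using assms(1,2) prime_ge_2_nat[of p] by (cases "p = 2") auto
  moreover have "p \<le> p ^ \<gamma>" using assms(3) \<open>p \<ge> 3\<close> by (simp add: self_le_power)
  ultimately show ?thesis by simp
qed

lemma primroot_half_totient:
  assumes "prime p" "odd p" "\<gamma> \<ge> 1" "residue_primroot (p ^ \<gamma>) g"
  shows "p ^ \<gamma> dvd g ^ (totient (p ^ \<gamma>) div 2) + 1"
proof -
  define a where "a = p ^ \<gamma>"
  define h where "h = g ^ (totient a div 2)"
  have "a > 2" unfolding a_def using assms(1-3) by (rule odd_prime_power_gt_2)
  then have even: "even (totient a)" by (rule totient_even)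
  have ord: "ord a g = totient a" "totient a > 0"
    using assms(4) by (simp_all add: residue_primroot_def a_def)
  have "[h ^ 2 = 1] (mod a)"
    using even ord(1) ord_works[of g a] by (simp add: h_def power_mult[symmetric])
  moreover have "\<not> [h = 1] (mod a)"
  proof -
    from even obtain t where t: "totient a = 2 * t" ..
    with ord(2) have "0 < totient a div 2" "totient a div 2 < ord a g"
      unfolding ord(1) by simp_all
    then show ?thesis unfolding h_def by (rule ord_minimal)
  qed
  ultimately have "int a dvd int h ^ 2 - 1" "\<not> int a dvd int h - 1"
    by (simp_all add: cong_iff_dvd_diff flip: cong_int_iff)
  moreover have "int h ^ 2 - 1 = (int h - 1) * (int h + 1)"
    by (simp add: power2_eq_square algebra_simps)
  ultimately have "int a dvd int h + 1"
    using odd_prime_power_dvd_mult_pm_one[OF assms(1,2), of \<gamma> "int h"] unfolding a_def by auto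
  then have "int a dvd int (h + 1)" by (simp add: add.commute)
  then show ?thesis unfolding a_def h_def by (simp only: int_dvd_int_iff)
qed

lemma primroot_dvd_add_iff:
  assumes "residue_primroot a g" "a dvd g ^ (totient a div 2) + 1"
    and "[u = g ^ i] (mod a)" "[v = g ^ j] (mod a)"
  shows "a dvd u + v \<longleftrightarrow> [int i = int j + int (totient a div 2)] (mod int (totient a))"
proof -
  define h where "h = totient a div 2"
  have "a dvd g ^ j * (g ^ h + 1)"
    using assms(2) unfolding h_def by (rule dvd_mult)
  then have minus: "[g ^ (j + h) + g ^ j = 0] (mod a)"
    by (simp add: cong_0_iff power_add algebra_simps)
  have "a dvd u + v \<longleftrightarrow> [g ^ i + g ^ j = 0] (mod a)"
    using cong_add[OF assms(3,4)] by (simp add: cong_0_iff cong_dvd_iff)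
  also have "\<dots> \<longleftrightarrow> [g ^ i + g ^ j = g ^ (j + h) + g ^ j] (mod a)"
    using minus by (meson cong_sym cong_trans)
  also have "\<dots> \<longleftrightarrow> [g ^ i = g ^ (j + h)] (mod a)"
    by (rule cong_add_rcancel_nat)
  also have "\<dots> \<longleftrightarrow> [int i = int j + int h] (mod int (totient a))"
    using primroot_power_cong_iff[OF assms(1)] by simp
  finally show ?thesis by (simp add: h_def)
qed

section \<open>Reduction to signed subsums of indices\<close>

locale prime_power_covering =
  fixes p \<gamma> a m d n :: nat and H :: "int set" and g :: nat
  assumes prime: "prime p" and odd_p: "odd p" and \<gamma>: "\<gamma> \<ge> 1" and a: "a = p ^ \<gamma>"
    and totient_a: "totient a = 2 ^ m * d" and odd_d: "odd d"
    and subgroup_H: "subgroup H (unit_group a)" and odd_card_H: "odd (card H)"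
    and maximal_H: "\<forall>K. subgroup K (unit_group a) \<and> odd (card K) \<and> H \<subseteq> K \<longrightarrow> K = H"
    and n_pos: "n > 0" and coprime_n_a: "gcd n a = 1"
    and covering: "H \<subseteq> {int r mod int a | r. r \<in># prime_factorization n}"
    and primroot: "residue_primroot a g"
begin

abbreviation T :: "nat multiset" where
  "T \<equiv> filter_mset (\<lambda>r. int r mod int a \<notin> H) (prime_factorization n)"

abbreviation ind :: "nat \<Rightarrow> nat" where
  "ind \<equiv> discrete_log a g"

lemma a_gt_2: "a > 2"
  unfolding a using prime odd_p \<gamma> by (rule odd_prime_power_gt_2)

lemma m_pos: "m > 0"
  using totient_even[OF a_gt_2] totient_a odd_d by (cases m) auto

lemma half_totient: "totient a div 2 = 2 ^ (m - 1) * d"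
  using totient_a m_pos by (cases m) auto

lemma half_totient_cong: "[int (totient a div 2) = 2 ^ (m - 1)] (mod 2 ^ m)"
proof -
  obtain t where "d = 2 * t + 1" using odd_d by (rule oddE)
  then have "int (totient a div 2) - 2 ^ (m - 1) = 2 ^ m * int t"
    using half_totient m_pos by (cases m) (auto simp: algebra_simps)
  then show ?thesis by (simp add: cong_iff_dvd_diff)
qed

lemma primroot_half: "a dvd g ^ (totient a div 2) + 1"
  using primroot_half_totient[OF prime odd_p \<gamma>] primroot a by simp

lemma coprime_n: "coprime n a"
  using coprime_n_a by (simp only: coprime_iff_gcd_eq_1)

lemma coprime_factor: "r \<in># prime_factorization n \<Longrightarrow> coprime r a"
  using coprime_n by (meson coprime_divisors dvd_refl in_prime_factors_imp_dvd)

lemma ind_cong: "r \<in># prime_factorization n \<Longrightarrow> [r = g ^ ind r] (mod a)"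
  using discrete_log_cong a_gt_2 primroot coprime_factor by simp

lemma factor_in_H_iff: "r \<in># prime_factorization n \<Longrightarrow> int r mod int a \<in> H \<longleftrightarrow> 2 ^ m dvd ind r"
  using mem_maximal_odd_subgroup_iff[OF _ primroot totient_a odd_d subgroup_H odd_card_H maximal_H
      coprime_factor ind_cong] a_gt_2 by simp

lemma prod_factors_cong:
  assumes "C \<subseteq># prime_factorization n"
  shows "[prod_mset C = g ^ sum_mset (image_mset ind C)] (mod a)"
  using assms ind_cong by (intro prod_mset_cong_power_sum) (auto dest: mset_subset_eqD)

lemma prod_factors_pos:
  assumes "C \<subseteq># prime_factorization n"
  shows "prod_mset C > 0"
proof -
  have "\<forall>r\<in>#C. r > 0"
    using assms by (auto dest!: mset_subset_eqD intro: prime_gt_0_nat in_prime_factors_imp_prime)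
  then show ?thesis by (induction C) auto
qed

(* This is where the prime factors of n are needed to cover H. *)
lemma exists_factor_in_H_with_index:
  assumes "(2::int) ^ m dvd c"
  obtains q where "q \<in># prime_factorization n" "int q mod int a \<in> H"
    "[int (ind q) = c] (mod int (totient a))"
proof -
  have "totient a > 0" using a_gt_2 by simp
  define k where "k = nat (c mod int (totient a))"
  have k: "int k = c mod int (totient a)"
    unfolding k_def using \<open>totient a > 0\<close> by simp
  have "(2::int) ^ m dvd int (totient a)" by (simp add: totient_a)
  with assms have "int (2 ^ m) dvd int k" by (simp add: k dvd_mod_iff)
  then have "2 ^ m dvd k" by (simp only: int_dvd_int_iff)
  moreover have "coprime (g ^ k) a"
    using primroot by (simp add: residue_primroot_def coprime_commute)
  ultimately have "int (g ^ k) mod int a \<in> H"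
    using mem_maximal_odd_subgroup_iff[OF _ primroot totient_a odd_d subgroup_H odd_card_H maximal_H
        _ cong_refl] a_gt_2 by simp
  with covering obtain q where q: "q \<in># prime_factorization n" "int q mod int a = int (g ^ k) mod int a"
    by force
  from q(2) have "[g ^ ind q = g ^ k] (mod a)"
    using ind_cong[OF q(1)] by (metis cong_def cong_int_iff cong_sym cong_trans)
  then have "[int (ind q) = int k] (mod int (totient a))"
    using primroot_power_cong_iff[OF primroot] by blast
  moreover have "[int k = c] (mod int (totient a))"
    using k by (simp add: cong_def)
  ultimately have "[int (ind q) = c] (mod int (totient a))"
    by (rule cong_trans)
  with q \<open>int (g ^ k) mod int a \<in> H\<close> that show thesis by simp
qed

lemma divisor_pair_of_signed_subsum:
  assumes "s \<in> signed_subsums (image_mset (\<lambda>r. int (ind r)) T)" and "[s = 2 ^ (m - 1)] (mod 2 ^ m)"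
  shows "\<exists>u v. u > 0 \<and> v > 0 \<and> u * v dvd n \<and> a dvd u + v"
proof -
  let ?h = "totient a div 2"
  let ?S = "\<lambda>C. sum_mset (image_mset (\<lambda>r. int (ind r)) C)"
  obtain A B where AB: "A + B \<subseteq># T" and s: "s = ?S A - ?S B"
    using assms(1) unfolding signed_subsums_image_mset by blast
  from assms(2) have "[s = int ?h] (mod 2 ^ m)"
    using half_totient_cong by (metis cong_sym cong_trans)
  then have "2 ^ m dvd s - int ?h" by (simp add: cong_iff_dvd_diff)
  then obtain q where q: "q \<in># prime_factorization n" "int q mod int a \<in> H"
      "[int (ind q) = s - int ?h] (mod int (totient a))"
    by (rule exists_factor_in_H_with_index)
  from q(1,2) have "{#q#} \<subseteq># filter_mset (\<lambda>r. int r mod int a \<in> H) (prime_factorization n)"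
    by simp
  with AB have "A + B + {#q#} \<subseteq># T + filter_mset (\<lambda>r. int r mod int a \<in> H) (prime_factorization n)"
    by (rule subset_mset.add_mono)
  then have sub: "A + add_mset q B \<subseteq># prime_factorization n"
    using multiset_partition[of "prime_factorization n" "\<lambda>r. int r mod int a \<notin> H"] by simp
  define u where "u = prod_mset A"
  define v where "v = prod_mset (add_mset q B)"
  have subA: "A \<subseteq># prime_factorization n" and subB: "add_mset q B \<subseteq># prime_factorization n"
    using sub by (meson mset_subset_eq_add_left mset_subset_eq_add_right subset_mset.order_trans)+
  have "u > 0" "v > 0"
    unfolding u_def v_def by (fact prod_factors_pos[OF subA], fact prod_factors_pos[OF subB])
  have "u * v dvd n"
    using prod_mset_subset_imp_dvd[OF sub] n_pos by (simp add: u_def v_def ac_simps)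
  have "int (totient a) dvd int (sum_mset (image_mset ind A)) -
      (int (sum_mset (image_mset ind (add_mset q B))) + int ?h)"
    using q(3) s by (simp add: cong_iff_dvd_diff dvd_diff_commute algebra_simps multiset.map_comp o_def)
  then have "a dvd u + v"
    using primroot_dvd_add_iff[OF primroot primroot_half prod_factors_cong[OF subA]
        prod_factors_cong[OF subB]]
    unfolding u_def v_def by (simp add: cong_iff_dvd_diff multiset.map_comp o_def)
  with \<open>u > 0\<close> \<open>v > 0\<close> \<open>u * v dvd n\<close> show ?thesis by blast
qed

(* Prime factors with residue in H have index divisible by 2^m and drop out modulo 2^m. *)
lemma signed_subsum_indices_mod_pow2:
  assumes "s \<in> signed_subsums (image_mset (\<lambda>r. int (ind r)) (prime_factorization n))"
  obtains t where "t \<in> signed_subsums (image_mset (\<lambda>r. int (ind r)) T)" "[t = s] (mod 2 ^ m)"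
proof -
  let ?ind = "\<lambda>r. int (ind r)" and ?P = "prime_factorization n"
  define Q where "Q = filter_mset (\<lambda>r. int r mod int a \<in> H) ?P"
  have "image_mset ?ind ?P = image_mset ?ind T + image_mset ?ind Q"
    using multiset_partition[of ?P "\<lambda>r. int r mod int a \<notin> H"]
    unfolding Q_def image_mset_union[symmetric] by simp
  with assms obtain t u where t: "t \<in> signed_subsums (image_mset ?ind T)"
    and u: "u \<in> signed_subsums (image_mset ?ind Q)" and "s = t + u"
    using signed_subsums_union by metis
  have "(2::int) ^ m dvd ?ind r" if "r \<in># Q" for r
  proof -
    from that have "2 ^ m dvd ind r" using factor_in_H_iff by (auto simp: Q_def)
    then have "int (2 ^ m) dvd int (ind r)" by (simp only: int_dvd_int_iff)
    then show ?thesis by simp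
  qed
  with u have "2 ^ m dvd u"
    by (intro signed_subsums_dvd[of "image_mset ?ind Q"]) auto
  with \<open>s = t + u\<close> have "[t = s] (mod 2 ^ m)"
    by (simp add: cong_iff_dvd_diff)
  with t that show thesis by blast
qed

lemma signed_subsum_of_divisor_pair:
  assumes "u > 0" "v > 0" "u * v dvd n" "a dvd u + v"
  shows "\<exists>s\<in>signed_subsums (image_mset (\<lambda>r. int (ind r)) T). [s = 2 ^ (m - 1)] (mod 2 ^ m)"
proof -
  let ?ind = "\<lambda>r. int (ind r)" and ?P = "prime_factorization n"
  let ?S = "\<lambda>C. sum_mset (image_mset ?ind C)"
  let ?U = "prime_factorization u" and ?V = "prime_factorization v"
  have "?U + ?V = prime_factorization (u * v)"
    using assms(1,2) by (simp add: prime_factorization_mult)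
  also have "\<dots> \<subseteq># ?P"
    using assms(1-3) n_pos by (subst prime_factorization_subset_iff_dvd) auto
  finally have sub: "?U + ?V \<subseteq># ?P" .
  then have "?U \<subseteq># ?P" "?V \<subseteq># ?P"
    by (meson mset_subset_eq_add_left mset_subset_eq_add_right subset_mset.order_trans)+
  then have "[u = g ^ sum_mset (image_mset ind ?U)] (mod a)" "[v = g ^ sum_mset (image_mset ind ?V)] (mod a)"
    using prod_factors_cong assms(1,2) by (metis prod_mset_prime_factorization_nat not_gr0)+
  with assms(4) have "[int (sum_mset (image_mset ind ?U)) =
      int (sum_mset (image_mset ind ?V)) + int (totient a div 2)] (mod int (totient a))"
    using primroot_dvd_add_iff[OF primroot primroot_half] by blast
  then have "2 ^ m dvd int (sum_mset (image_mset ind ?U)) -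
      (int (sum_mset (image_mset ind ?V)) + int (totient a div 2))"
    unfolding cong_iff_dvd_diff by (rule dvd_trans[rotated]) (simp add: totient_a)
  then have "[?S ?U - ?S ?V = int (totient a div 2)] (mod 2 ^ m)"
    by (simp add: cong_iff_dvd_diff algebra_simps multiset.map_comp o_def)
  with half_totient_cong have "[?S ?U - ?S ?V = 2 ^ (m - 1)] (mod 2 ^ m)"
    by (rule cong_trans[rotated])
  moreover have "?S ?U - ?S ?V \<in> signed_subsums (image_mset ?ind ?P)"
    using sub unfolding signed_subsums_image_mset by blast
  ultimately show ?thesis
    using signed_subsum_indices_mod_pow2 by (metis cong_trans)
qed

lemma not_in_E_star_iff:
  "n \<notin> E_star a \<longleftrightarrow>
     (\<exists>s\<in>signed_subsums (image_mset (\<lambda>r. int (ind r)) T). [s = 2 ^ (m - 1)] (mod 2 ^ m))"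
proof -
  have "n \<notin> E_star a \<longleftrightarrow> (\<exists>u v. u > 0 \<and> v > 0 \<and> u * v dvd n \<and> a dvd u + v)"
    using E_star_iff[of a n] a_gt_2 n_pos coprime_n by (simp only: not_not)
  then show ?thesis
    using divisor_pair_of_signed_subsum signed_subsum_of_divisor_pair by blast
qed

lemma indices_not_dvd: "\<forall>x\<in>#image_mset (\<lambda>r. int (ind r)) T. \<not> (2::int) ^ m dvd x"
proof
  fix x assume "x \<in># image_mset (\<lambda>r. int (ind r)) T"
  then obtain r where r: "r \<in># prime_factorization n" "int r mod int a \<notin> H" "x = int (ind r)"
    by auto
  then have "\<not> int (2 ^ m) dvd int (ind r)"
    using factor_in_H_iff by (simp only: int_dvd_int_iff) blast
  with r(3) show "\<not> (2::int) ^ m dvd x" by simp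
qed

lemma exponent_pm_iff:
  assumes "r \<in># prime_factorization n"
  shows "(\<exists>e'::nat. [r = g ^ e'] (mod a) \<and> ([int e' = e] (mod 2 ^ m) \<or> [int e' = - e] (mod 2 ^ m))) \<longleftrightarrow>
    [int (ind r) = e] (mod 2 ^ m) \<or> [int (ind r) = - e] (mod 2 ^ m)"
proof
  assume "\<exists>e'. [r = g ^ e'] (mod a) \<and> ([int e' = e] (mod 2 ^ m) \<or> [int e' = - e] (mod 2 ^ m))"
  then obtain e' where e': "[r = g ^ e'] (mod a)" "[int e' = e] (mod 2 ^ m) \<or> [int e' = - e] (mod 2 ^ m)"
    by blast
  from e'(1) ind_cong[OF assms] have "[g ^ ind r = g ^ e'] (mod a)"
    by (metis cong_sym cong_trans)
  then have "[int (ind r) = int e'] (mod int (totient a))"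
    using primroot_power_cong_iff[OF primroot] by blast
  then have "[int (ind r) = int e'] (mod 2 ^ m)"
    by (rule cong_dvd_modulus) (simp add: totient_a)
  with e'(2) show "[int (ind r) = e] (mod 2 ^ m) \<or> [int (ind r) = - e] (mod 2 ^ m)"
    by (metis cong_trans)
qed (use ind_cong[OF assms] in blast)

lemma not_in_E_star_if_many:
  assumes "2 ^ (m - 1) \<le> size T"
  shows "n \<notin> E_star a"
proof -
  obtain k where m: "m = Suc k" using m_pos by (cases m) auto
  with assms have "2 ^ k \<le> size (image_mset (\<lambda>r. int (ind r)) T)" by simp
  then obtain s where "s \<in> signed_subsums (image_mset (\<lambda>r. int (ind r)) T)"
    "[s = 2 ^ k] (mod 2 ^ Suc k)"
    using signed_subsum_exact_pow2 indices_not_dvd[unfolded m] by blast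
  then show ?thesis using not_in_E_star_iff by (auto simp: m)
qed

lemma in_E_star_iff_pm:
  assumes "size T = 2 ^ (m - 1) - 1"
  shows "n \<in> E_star a \<longleftrightarrow> (\<exists>e::int. odd e \<and> (\<forall>r\<in>#T. \<exists>e'::nat. [r = g ^ e'] (mod a) \<and>
    ([int e' = e] (mod 2 ^ m) \<or> [int e' = - e] (mod 2 ^ m))))"
proof -
  obtain k where m: "m = Suc k" using m_pos by (cases m) auto
  let ?X = "image_mset (\<lambda>r. int (ind r)) T"
  have pm_iff: "(\<forall>r\<in>#T. \<exists>e'::nat. [r = g ^ e'] (mod a) \<and>
      ([int e' = e] (mod 2 ^ m) \<or> [int e' = - e] (mod 2 ^ m))) \<longleftrightarrow>
      (\<forall>x\<in>#?X. [x = e] (mod 2 ^ Suc k) \<or> [x = - e] (mod 2 ^ Suc k))" for e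
    using exponent_pm_iff by (auto simp: m)
  have small: "size ?X < 2 ^ k" and large: "2 ^ k \<le> size ?X + 1"
    using assms m by simp_all
  have E_iff: "n \<in> E_star a \<longleftrightarrow> \<not> (\<exists>s\<in>signed_subsums ?X. [s = 2 ^ k] (mod 2 ^ Suc k))"
    using not_in_E_star_iff m by (metis diff_Suc_1)
  show ?thesis
  proof
    assume "n \<in> E_star a"
    then show "\<exists>e. odd e \<and> (\<forall>r\<in>#T. \<exists>e'::nat. [r = g ^ e'] (mod a) \<and>
        ([int e' = e] (mod 2 ^ m) \<or> [int e' = - e] (mod 2 ^ m)))"
      using E_iff signed_subsum_exact_pow2_unless_pm[OF indices_not_dvd[unfolded m] large] pm_iff
      by blast
  next
    assume "\<exists>e. odd e \<and> (\<forall>r\<in>#T. \<exists>e'::nat. [r = g ^ e'] (mod a) \<and>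
        ([int e' = e] (mod 2 ^ m) \<or> [int e' = - e] (mod 2 ^ m)))"
    then obtain e where "odd e" "\<forall>x\<in>#?X. [x = e] (mod 2 ^ Suc k) \<or> [x = - e] (mod 2 ^ Suc k)"
      using pm_iff by blast
    then show "n \<in> E_star a"
      using E_iff no_signed_subsum_exact_pow2[OF _ _ small] by blast
  qed
qed

end

theorem lemma2p6:
  fixes p \<gamma> a m d n :: nat and H :: "int set"
  assumes "prime p" and "odd p" and "\<gamma> \<ge> 1" and "a = p ^ \<gamma>"
    and "totient a = 2 ^ m * d" and "odd d"
    and "subgroup H (unit_group a)" and "odd (card H)"
    and "\<forall>K. subgroup K (unit_group a) \<and> odd (card K) \<and> H \<subseteq> K \<longrightarrow> K = H"
    and "n > 0" and "gcd n a = 1"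
    and "H \<subseteq> {int r mod int a | r. r \<in># prime_factorization n}"
  shows "(size (filter_mset (\<lambda>r. int r mod int a \<notin> H) (prime_factorization n)) \<ge> 2 ^ (m - 1)
            \<longrightarrow> n \<notin> E_star a)
       \<and> (\<forall>g. residue_primroot a g \<longrightarrow>
            size (filter_mset (\<lambda>r. int r mod int a \<notin> H) (prime_factorization n)) = 2 ^ (m - 1) - 1
            \<longrightarrow> (n \<in> E_star a \<longleftrightarrow>
                 (\<exists>e::int. odd e \<and>
                    (\<forall>r \<in># filter_mset (\<lambda>r. int r mod int a \<notin> H) (prime_factorization n).
                       \<exists>e'::nat. [r = g ^ e'] (mod a) \<and>
                          ([int e' = e] (mod 2 ^ m) \<or> [int e' = - e] (mod 2 ^ m))))))"
proof -
  have setting: "prime_power_covering p \<gamma> a m d n H g" if "residue_primroot a g" for g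
    unfolding prime_power_covering_def using assms that by blast
  obtain g0 where "\<forall>k>0. residue_primroot (p ^ k) g0"
    using residue_primroot_odd_prime_power_exists[OF assms(1,2)] by blast
  with assms(3,4) have "residue_primroot a g0" by simp
  then show ?thesis
    using prime_power_covering.not_in_E_star_if_many[OF setting]
      prime_power_covering.in_E_star_iff_pm[OF setting] by blast
qed

end
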